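(* Let $(q_n)$ be the Fibonacci Quilt sequence. There is a constant $\rho\in(0,1)$, $\rho\approx0.92627$, such that the proportion of integers $m\in[1,q_n)$ for which the greedy decomposition of $m$ is an FQ-legal decomposition converges to $\rho$ as $n\to\infty$.
   Context: Given an increasing sequence of positive integers $(q_i)_{i\ge1}$, an FQ-legal decomposition of an integer $m\ge0$ is an expression $m=q_{\ell_1}+q_{\ell_2}+\cdots+q_{\ell_t}$ ($t\ge0$, the empty sum representing $0$) with distinct indices $\ell_1>\ell_2>\cdots>\ell_t$ such that $|\ell_i-\ell_j|\notin\{1,3,4\}$ for all $i,j$, and $\{1,3\}\not\subset\{\ell_1,\dots,\ell_t\}$. The Fibonacci Quilt sequence is the increasing sequence of positive integers $(q_i)_{i\ge1}$ in which each $q_i$ is the smallest positive integer having no FQ-legal decomposition using only $q_1,\dots,q_{i-1}$. Its first terms are $1,2,3,4,5,7,9,12,16,21,28,37,49,\dots$. The greedy decomposition of a positive integer $m$ is obtained by choosing the largest $q_k\le m$ as a summand and, if $m-q_k>0$, recursively appending the greedy decomposition of $m-q_k$; the greedy algorithm succeeds on $m$ if the resulting decomposition is FQ-legal. *)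

theory Defs
  imports Complex_Main
begin

definition FQ_legal_set :: "nat set \<Rightarrow> bool" where
  "FQ_legal_set S \<longleftrightarrow> finite S \<and> (\<forall>i\<in>S. 1 \<le> i)
     \<and> (\<forall>i\<in>S. \<forall>j\<in>S. nat \<bar>int i - int j\<bar> \<notin> {1, 3, 4})
     \<and> \<not> ({1, 3} \<subseteq> S)"

definition FQ_legal_list :: "nat list \<Rightarrow> bool" where
  "FQ_legal_list ks \<longleftrightarrow> sorted_wrt (>) ks \<and> FQ_legal_set (set ks)"

text \<open>First n terms q_1,...,q_n of the Fibonacci Quilt sequence (list position i-1 holds q_i).\<close>
primrec fq_list :: "nat \<Rightarrow> nat list" where
  "fq_list 0 = []"
| "fq_list (Suc n) = fq_list n @
     [LEAST m. 0 < m \<and> \<not> (\<exists>S. S \<subseteq> {1..n} \<and> FQ_legal_set S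
                               \<and> (\<Sum>i\<in>S. fq_list n ! (i - 1)) = m)]"

definition fq :: "nat \<Rightarrow> nat" where
  "fq i = fq_list i ! (i - 1)"

inductive greedy_dec :: "nat \<Rightarrow> nat list \<Rightarrow> bool" where
  greedy_zero: "greedy_dec 0 []"
| greedy_step: "\<lbrakk> 0 < m; 1 \<le> k; fq k \<le> m;
                  \<forall>j. 1 \<le> j \<and> fq j \<le> m \<longrightarrow> fq j \<le> fq k;
                  greedy_dec (m - fq k) ks \<rbrakk> \<Longrightarrow> greedy_dec m (k # ks)"

definition greedy_succeeds :: "nat \<Rightarrow> bool" where
  "greedy_succeeds m \<longleftrightarrow> (\<exists>ks. greedy_dec m ks \<and> FQ_legal_list ks)"

end

theory Submission
  imports Defs
begin

text \<open>The Fibonacci Quilt sequence is the sequence \<open>quilt\<close> with \<open>quilt n = n\<close> for \<open>n \<le> 5\<close> and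
  \<open>quilt (n + 3) = quilt (n + 1) + quilt n\<close>: every \<open>m < quilt (n + 1)\<close> has a legal decomposition
  using indices up to \<open>n\<close>, while a legal decomposition of \<open>quilt (n + 1)\<close> would yield one of a
  smaller \<open>quilt (m + 1)\<close>.  Since \<open>quilt (n + 1) = quilt n + quilt (n - 4)\<close>, for
  \<open>quilt n \<le> m < quilt (n + 1)\<close> the greedy algorithm takes \<open>quilt n\<close> and continues with
  \<open>m - quilt n < quilt (n - 4)\<close>, whose summands lie at least five indices below \<open>n\<close>; so it
  succeeds on \<open>m\<close> iff it succeeds on \<open>m - quilt n\<close>.  Hence the number \<open>G n\<close> of successes below
  \<open>quilt n\<close> satisfies \<open>G (n + 1) = G n + G (n - 4)\<close>.  Up to a bounded periodic term, \<open>7 G n\<close> solves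
  the same three-term recurrence as \<open>quilt\<close>, and the ratio of two such solutions converges
  geometrically; its value at \<open>n = 40\<close> determines the limit to within \<open>10\<^sup>-\<^sup>6\<close>.\<close>

fun quilt :: "nat \<Rightarrow> nat" where
  "quilt n = (if n \<le> 5 then n else quilt (n - 2) + quilt (n - 3))"

declare quilt.simps [simp del]

lemma quilt_small: "n \<le> 5 \<Longrightarrow> quilt n = n"
  by (simp add: quilt.simps)

lemma quilt_rec:
  assumes "2 \<le> n"
  shows "quilt (n + 3) = quilt (n + 1) + quilt n"
  using assms by (cases "n = 2") (simp_all add: quilt_small quilt.simps[of "n + 3"])

lemma quilt_rec_diff:
  assumes "5 \<le> n"
  shows "quilt n = quilt (n - 2) + quilt (n - 3)"
proof -
  have "n - 3 + 3 = n" "n - 3 + 1 = n - 2"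
    using assms by auto
  then show ?thesis
    using quilt_rec[of "n - 3"] assms by simp
qed

lemma quilt_6: "quilt 6 = 7"
  using quilt_rec[of 3] by (simp add: quilt_small)

lemma strict_mono_quilt: "strict_mono quilt"
  unfolding strict_mono_Suc_iff
proof
  show "quilt n < quilt (Suc n)" for n
  proof (induction n rule: less_induct)
    case (less n)
    show ?case
    proof (cases "n \<le> 4")
      case True
      then show ?thesis by (simp add: quilt_small)
    next
      case False
      define k where "k = n - 3"
      have n: "n = k + 3" and k: "2 \<le> k"
        using False by (auto simp: k_def)
      have "quilt k < quilt (k + 2)"
        using less.IH[of k] less.IH[of "k + 1"] n by simp
      moreover have "quilt (k + 3) = quilt (k + 1) + quilt k"
        using quilt_rec[OF k] .
      moreover have "quilt (k + 4) = quilt (k + 2) + quilt (k + 1)"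
        using quilt_rec[of "k + 1"] k by (simp add: eval_nat_numeral)
      ultimately show ?thesis
        using n by (simp add: eval_nat_numeral)
    qed
  qed
qed

lemmas quilt_less_iff = strict_mono_less[OF strict_mono_quilt]
lemmas quilt_le_iff = strict_mono_less_eq[OF strict_mono_quilt]

lemma quilt_ge: "n \<le> quilt n"
  by (rule strict_mono_imp_increasing[OF strict_mono_quilt])

lemma quilt_eq_0_iff [simp]: "quilt n = 0 \<longleftrightarrow> n = 0"
  using quilt_ge[of n] quilt_small[of 0] by auto

lemma quilt_gap:
  assumes "6 \<le> n"
  shows "quilt (Suc n) = quilt n + quilt (n - 4)"
proof -
  define k where "k = n - 4"
  have n: "n = k + 4" and k: "2 \<le> k"
    using assms by (auto simp: k_def)
  have "quilt (k + 3) = quilt (k + 1) + quilt k"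
    using quilt_rec[OF k] .
  moreover have "quilt (k + 4) = quilt (k + 2) + quilt (k + 1)"
    using quilt_rec[of "k + 1"] k by (simp add: eval_nat_numeral)
  moreover have "quilt (k + 5) = quilt (k + 3) + quilt (k + 2)"
    using quilt_rec[of "k + 2"] k by (simp add: eval_nat_numeral)
  ultimately show ?thesis
    using n by (simp add: eval_nat_numeral)
qed

lemma FQ_legal_set_finite: "FQ_legal_set S \<Longrightarrow> finite S"
  unfolding FQ_legal_set_def by blast

lemma FQ_legal_set_pos: "FQ_legal_set S \<Longrightarrow> i \<in> S \<Longrightarrow> 1 \<le> i"
  unfolding FQ_legal_set_def by blast

lemma FQ_legal_set_subset: "FQ_legal_set S \<Longrightarrow> T \<subseteq> S \<Longrightarrow> FQ_legal_set T"
  unfolding FQ_legal_set_def by (meson finite_subset subset_iff order_trans)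

lemma FQ_legal_set_gap:
  assumes "FQ_legal_set S" "i \<in> S" "j \<in> S" "i < j"
  shows "j - i \<notin> {1, 3, 4}"
proof -
  have "nat \<bar>int i - int j\<bar> = j - i"
    using \<open>i < j\<close> by simp
  then show ?thesis
    using assms unfolding FQ_legal_set_def by metis
qed

lemma FQ_legal_set_insert_far:
  assumes "FQ_legal_set S" "\<forall>i\<in>S. i + 5 \<le> n" "1 \<le> n"
  shows "FQ_legal_set (insert n S)"
proof -
  have "nat \<bar>int i - int j\<bar> \<notin> {1, 3, 4}" if "i \<in> insert n S" "j \<in> insert n S" for i j
    using that assms(1,2) by (cases "i = n"; cases "j = n") (auto simp: FQ_legal_set_def)
  moreover have "\<not> {1, 3} \<subseteq> insert n S"
    using assms(1,2) by (auto simp: FQ_legal_set_def)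
  ultimately show ?thesis
    using assms(1,3) by (auto simp: FQ_legal_set_def)
qed

lemma FQ_legal_subsets_upto_5:
  assumes "S \<subseteq> {1..5}" "FQ_legal_set S"
  shows "S \<in> {{}, {1}, {2}, {3}, {4}, {5}, {2, 4}, {3, 5}}"
proof -
  have excl: "\<not> (a \<in> S \<and> b \<in> S)"
    if "(a, b) \<in> {(1, 2), (1, 3), (1, 4), (1, 5), (2, 3), (2, 5), (3, 4), (4, 5)}" for a b :: nat
    using that FQ_legal_set_gap[OF assms(2), of a b] assms(2) by (auto simp: FQ_legal_set_def)
  have "S = {x. x = 1 \<and> 1 \<in> S} \<union> {x. x = 2 \<and> 2 \<in> S} \<union> {x. x = 3 \<and> 3 \<in> S}
      \<union> {x. x = 4 \<and> 4 \<in> S} \<union> {x. x = 5 \<and> 5 \<in> S}"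
    using assms(1) by (auto simp: atLeastAtMost_iff le_Suc_eq eval_nat_numeral)
  moreover have "\<not> (1 \<in> S \<and> 2 \<in> S)" "\<not> (1 \<in> S \<and> 3 \<in> S)" "\<not> (1 \<in> S \<and> 4 \<in> S)"
    "\<not> (1 \<in> S \<and> 5 \<in> S)" "\<not> (2 \<in> S \<and> 3 \<in> S)" "\<not> (2 \<in> S \<and> 5 \<in> S)"
    "\<not> (3 \<in> S \<and> 4 \<in> S)" "\<not> (4 \<in> S \<and> 5 \<in> S)"
    by (rule excl; simp)+
  ultimately show ?thesis
    by (cases "1 \<in> S"; cases "2 \<in> S"; cases "3 \<in> S"; cases "4 \<in> S"; cases "5 \<in> S")
      (simp_all add: insert_commute)
qed

lemma FQ_legal_set_below_top:
  assumes "FQ_legal_set S" "S \<subseteq> {1..j}" "j \<in> S" "j - 2 \<notin> S"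
  shows "S - {j} \<subseteq> {1..j - 5}"
proof
  fix x assume x: "x \<in> S - {j}"
  then have "x < j" "1 \<le> x"
    using assms(2) FQ_legal_set_pos[OF assms(1)] by fastforce+
  moreover have "j - x \<notin> {1, 3, 4}"
    using FQ_legal_set_gap[OF assms(1)] x assms(3) \<open>x < j\<close> by blast
  moreover have "x \<noteq> j - 2"
    using x assms(4) by blast
  ultimately show "x \<in> {1..j - 5}"
    by auto
qed

lemma FQ_legal_set_remove_top:
  assumes "FQ_legal_set S" "S \<subseteq> {1..j}" "j \<in> S"
  shows "S - {j} \<subseteq> {1..j - 2}"
proof
  fix x assume x: "x \<in> S - {j}"
  then have "x < j" "1 \<le> x"
    using assms(2) FQ_legal_set_pos[OF assms(1)] by fastforce+
  moreover have "j - x \<noteq> 1"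
    using FQ_legal_set_gap[OF assms(1)] x assms(3) \<open>x < j\<close> by blast
  ultimately show "x \<in> {1..j - 2}"
    by auto
qed

lemma quilt_legal_representation_small:
  assumes "n \<le> 5" "m < quilt (Suc n)"
  shows "\<exists>S. S \<subseteq> {1..n} \<and> FQ_legal_set S \<and> sum quilt S = m"
proof -
  have "m \<le> n \<or> n = 5 \<and> m = 6"
    using assms quilt_6 by (cases "n = 5") (auto simp: quilt_small)
  then consider "m = 0" | "1 \<le> m" "m \<le> n" "m \<le> 5" | "n = 5" "m = 6"
    using assms(1) by (cases "m = 0") auto
  then show ?thesis
  proof cases
    case 1
    then show ?thesis
      by (intro exI[of _ "{}"]) (simp add: FQ_legal_set_def)
  next
    case 2
    then show ?thesis
      by (intro exI[of _ "{m}"]) (simp add: FQ_legal_set_def quilt_small)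
  next
    case 3
    then show ?thesis
      by (intro exI[of _ "{2, 4}"]) (simp add: FQ_legal_set_def quilt_small)
  qed
qed

lemma quilt_legal_representation:
  "m < quilt (Suc n) \<Longrightarrow> \<exists>S. S \<subseteq> {1..n} \<and> FQ_legal_set S \<and> sum quilt S = m"
proof (induction n arbitrary: m rule: less_induct)
  case (less n)
  show ?case
  proof (cases "n \<le> 5")
    case True
    then show ?thesis
      using quilt_legal_representation_small less.prems by blast
  next
    case False
    then have n: "6 \<le> n" by simp
    show ?thesis
    proof (cases "m < quilt n")
      case True
      then obtain S where "S \<subseteq> {1..n - 1}" "FQ_legal_set S" "sum quilt S = m"
        using less.IH[of "n - 1" m] n by auto
      moreover have "{1..n - 1} \<subseteq> {1..n}"
        by auto
      ultimately show ?thesis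
        by blast
    next
      case False
      then have "m - quilt n < quilt (Suc (n - 5))"
        using less.prems quilt_gap[OF n] n by (simp add: Suc_diff_Suc numeral_eq_Suc)
      then obtain S where S: "S \<subseteq> {1..n - 5}" "FQ_legal_set S" "sum quilt S = m - quilt n"
        using less.IH[of "n - 5"] n by auto
      have "n \<notin> S"
        using S(1) n by auto
      then have "sum quilt (insert n S) = m"
        using S(3) False FQ_legal_set_finite[OF S(2)] by simp
      moreover have "FQ_legal_set (insert n S)"
        using S(1,2) n by (intro FQ_legal_set_insert_far) (auto dest!: subsetD)
      moreover have "insert n S \<subseteq> {1..n}"
        using S(1) n by (auto dest!: subsetD)
      ultimately show ?thesis
        by blast
    qed
  qed
qed

lemma FQ_legal_sum_less_quilt:
  "FQ_legal_set S \<Longrightarrow> S \<subseteq> {1..j} \<Longrightarrow> sum quilt S < quilt (j + 3)"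
proof (induction j arbitrary: S rule: less_induct)
  case (less j)
  note legal = less.prems(1) and sub = less.prems(2)
  show ?case
  proof (cases "j \<le> 2")
    case True
    then have "sum quilt S \<le> sum quilt {1..j}"
      using sub by (intro sum_mono2) auto
    also have "\<dots> < quilt (j + 3)"
      using True by (auto simp: quilt_small le_Suc_eq numeral_2_eq_2)
    finally show ?thesis .
  next
    case False
    then have j: "3 \<le> j" by simp
    show ?thesis
    proof (cases "j \<in> S")
      case True
      have "S - {j} \<subseteq> {1..j - 2}"
        using FQ_legal_set_remove_top[OF legal sub True] .
      then have "sum quilt (S - {j}) < quilt (j + 1)"
        using less.IH[of "j - 2" "S - {j}"] FQ_legal_set_subset[OF legal] j by simp
      then show ?thesis
        using quilt_rec[of j] j sum.remove[OF FQ_legal_set_finite[OF legal] True, of quilt] by simp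
    next
      case False
      then have "S \<subseteq> {1..j - 1}"
        using sub by (fastforce dest!: subsetD simp: le_less)
      then have "sum quilt S < quilt (j + 2)"
        using less.IH[of "j - 1"] legal j by simp
      also have "\<dots> < quilt (j + 3)"
        by (simp add: quilt_less_iff)
      finally show ?thesis .
    qed
  qed
qed

lemma FQ_legal_sum_ne_quilt_small:
  assumes "n \<le> 5" "FQ_legal_set S" "S \<subseteq> {1..n}"
  shows "sum quilt S \<noteq> quilt (Suc n)"
proof -
  have "S \<in> {{}, {1}, {2}, {3}, {4}, {5}, {2, 4}, {3, 5}}"
    using assms by (intro FQ_legal_subsets_upto_5) auto
  then show ?thesis
    using assms quilt_6 by (cases "n = 5") (auto simp: quilt_small)
qed

lemma FQ_legal_sum_eq_quilt_descent:
  assumes n: "6 \<le> n" and legal: "FQ_legal_set S" and sub: "S \<subseteq> {1..n}"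
    and sum: "sum quilt S = quilt (Suc n)"
  obtains m T where "m < n" "FQ_legal_set T" "T \<subseteq> {1..m}" "sum quilt T = quilt (Suc m)"
proof -
  have fin: "finite S"
    using FQ_legal_set_finite[OF legal] .
  consider "n \<in> S" | "n \<notin> S" "n - 1 \<in> S" | "n \<notin> S" "n - 1 \<notin> S"
    by blast
  then show ?thesis
  proof cases
    case 1
    have rest: "sum quilt (S - {n}) = quilt (n - 4)"
      using sum sum.remove[OF fin 1, of quilt] quilt_gap[OF n] by simp
    have "n - 2 \<notin> S"
    proof
      assume "n - 2 \<in> S"
      then have "quilt (n - 2) \<le> sum quilt (S - {n})"
        using fin n by (intro member_le_sum) auto
      moreover have "quilt (n - 4) < quilt (n - 2)"
        using n by (simp add: quilt_less_iff)
      ultimately show False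
        using rest by simp
    qed
    then have "S - {n} \<subseteq> {1..n - 5}"
      using FQ_legal_set_below_top[OF legal sub 1] by blast
    moreover have "Suc (n - 5) = n - 4"
      using n by simp
    ultimately show ?thesis
      using that[of "n - 5" "S - {n}"] rest FQ_legal_set_subset[OF legal] n by auto
  next
    case 2
    have sub': "S \<subseteq> {1..n - 1}"
      using sub 2 by (fastforce dest!: subsetD simp: le_less)
    have "sum quilt (S - {n - 1}) = quilt (n - 2)"
      using sum sum.remove[OF fin 2(2), of quilt] quilt_rec_diff[of "Suc n"] n by simp
    moreover have "S - {n - 1} \<subseteq> {1..n - 3}"
      using FQ_legal_set_remove_top[OF legal sub' 2(2)] by (simp add: numeral_3_eq_3)
    moreover have "Suc (n - 3) = n - 2"
      using n by simp
    ultimately show ?thesis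
      using that[of "n - 3" "S - {n - 1}"] FQ_legal_set_subset[OF legal] n by auto
  next
    case 3
    have "S \<subseteq> {1..n - 2}"
    proof
      fix x assume "x \<in> S"
      with sub 3 have "1 \<le> x" "x \<le> n" "x \<noteq> n" "x \<noteq> n - 1"
        by auto
      then show "x \<in> {1..n - 2}"
        by auto
    qed
    then have "sum quilt S < quilt (n - 2 + 3)"
      by (rule FQ_legal_sum_less_quilt[OF legal])
    with sum n show ?thesis
      by simp
  qed
qed

lemma FQ_legal_sum_ne_quilt:
  "FQ_legal_set S \<Longrightarrow> S \<subseteq> {1..n} \<Longrightarrow> sum quilt S \<noteq> quilt (Suc n)"
proof (induction n arbitrary: S rule: less_induct)
  case (less n)
  show ?case
  proof
    assume sum: "sum quilt S = quilt (Suc n)"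
    show False
    proof (cases "n \<le> 5")
      case True
      with less.prems sum show False
        using FQ_legal_sum_ne_quilt_small by blast
    next
      case False
      then have "6 \<le> n"
        by simp
      then obtain m T where "m < n" "FQ_legal_set T" "T \<subseteq> {1..m}" "sum quilt T = quilt (Suc m)"
        using FQ_legal_sum_eq_quilt_descent[OF _ less.prems sum] by blast
      with less.IH show False
        by blast
    qed
  qed
qed

lemma fq_list_eq_quilt: "fq_list n = map quilt [1..<Suc n]"
proof (induction n)
  case 0
  then show ?case by simp
next
  case (Suc n)
  have sums: "(\<Sum>i\<in>S. fq_list n ! (i - 1)) = sum quilt S" if "S \<subseteq> {1..n}" for S
    using that Suc.IH by (intro sum.cong) (auto dest!: subsetD simp del: upt_Suc simp: nth_map)
  have "(LEAST m. 0 < m \<and> \<not> (\<exists>S. S \<subseteq> {1..n} \<and> FQ_legal_set S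
                        \<and> (\<Sum>i\<in>S. fq_list n ! (i - 1)) = m)) = quilt (Suc n)"
  proof (rule Least_equality)
    show "0 < quilt (Suc n) \<and> \<not> (\<exists>S. S \<subseteq> {1..n} \<and> FQ_legal_set S
                        \<and> (\<Sum>i\<in>S. fq_list n ! (i - 1)) = quilt (Suc n))"
      using sums FQ_legal_sum_ne_quilt quilt_ge[of "Suc n"] by fastforce
  next
    fix m
    assume "0 < m \<and> \<not> (\<exists>S. S \<subseteq> {1..n} \<and> FQ_legal_set S \<and> (\<Sum>i\<in>S. fq_list n ! (i - 1)) = m)"
    then show "quilt (Suc n) \<le> m"
      using quilt_legal_representation[of m n] sums by (metis not_le)
  qed
  then show ?case
    using Suc.IH by simp
qed

lemma fq_eq_quilt: "1 \<le> i \<Longrightarrow> fq i = quilt i"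
  unfolding fq_def fq_list_eq_quilt by (simp del: upt_Suc add: nth_map)

lemma quilt_bracket_unique:
  assumes "quilt k \<le> m" "m < quilt (Suc k)" "quilt k' \<le> m" "m < quilt (Suc k')"
  shows "k = k'"
proof -
  have "quilt k < quilt (Suc k')" "quilt k' < quilt (Suc k)"
    using assms by linarith+
  then show ?thesis
    unfolding quilt_less_iff by simp
qed

lemma greedy_dec_Nil_iff: "greedy_dec m [] \<longleftrightarrow> m = 0"
  by (auto elim: greedy_dec.cases intro: greedy_zero)

lemma greedy_dec_Cons_iff:
  "greedy_dec m (k # ks) \<longleftrightarrow>
     1 \<le> k \<and> quilt k \<le> m \<and> m < quilt (Suc k) \<and> greedy_dec (m - quilt k) ks"
proof
  assume "greedy_dec m (k # ks)"
  then show "1 \<le> k \<and> quilt k \<le> m \<and> m < quilt (Suc k) \<and> greedy_dec (m - quilt k) ks"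
  proof cases
    case greedy_step
    have "\<not> quilt (Suc k) \<le> m"
    proof
      assume "quilt (Suc k) \<le> m"
      then have "quilt (Suc k) \<le> quilt k"
        using greedy_step(4)[rule_format, of "Suc k"] greedy_step(2) by (simp add: fq_eq_quilt)
      then show False
        by (simp add: quilt_le_iff)
    qed
    then show ?thesis
      using greedy_step by (simp add: fq_eq_quilt)
  qed
next
  assume k: "1 \<le> k \<and> quilt k \<le> m \<and> m < quilt (Suc k) \<and> greedy_dec (m - quilt k) ks"
  show "greedy_dec m (k # ks)"
  proof (rule greedy_step)
    show "0 < m"
      using k quilt_ge[of k] by linarith
    show "\<forall>j. 1 \<le> j \<and> fq j \<le> m \<longrightarrow> fq j \<le> fq k"
    proof (intro allI impI)
      fix j assume j: "1 \<le> j \<and> fq j \<le> m"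
      then have "quilt j < quilt (Suc k)"
        using k fq_eq_quilt[of j] by auto
      then show "fq j \<le> fq k"
        using j k fq_eq_quilt[of j] fq_eq_quilt[of k] by (simp add: quilt_less_iff quilt_le_iff)
    qed
  qed (use k in \<open>simp_all add: fq_eq_quilt\<close>)
qed

lemma greedy_dec_unique: "greedy_dec m ks \<Longrightarrow> greedy_dec m ks' \<Longrightarrow> ks = ks'"
proof (induction ks arbitrary: m ks')
  case Nil
  then have "m = 0"
    by (simp add: greedy_dec_Nil_iff)
  with Nil.prems(2) show ?case
    by (cases ks') (auto simp: greedy_dec_Cons_iff)
next
  case (Cons k ks)
  then have "m \<noteq> 0"
    using quilt_ge[of k] by (auto simp: greedy_dec_Cons_iff)
  then obtain k' ks'' where ks': "ks' = k' # ks''"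
    using Cons.prems(2) by (cases ks') (auto simp: greedy_dec_Nil_iff)
  then have "k = k'"
    using Cons.prems by (auto simp: greedy_dec_Cons_iff intro: quilt_bracket_unique)
  then show ?case
    using Cons ks' by (auto simp: greedy_dec_Cons_iff)
qed

lemma greedy_dec_set: "greedy_dec m ks \<Longrightarrow> i \<in> set ks \<Longrightarrow> 1 \<le> i \<and> quilt i \<le> m"
  by (induction ks arbitrary: m) (force simp: greedy_dec_Cons_iff)+

lemma FQ_legal_list_Cons_far:
  assumes "\<forall>i\<in>set ks. i + 5 \<le> n" "1 \<le> n"
  shows "FQ_legal_list (n # ks) \<longleftrightarrow> FQ_legal_list ks"
  using assms FQ_legal_set_insert_far[of "set ks" n] FQ_legal_set_subset[of "insert n (set ks)" "set ks"]
  unfolding FQ_legal_list_def by fastforce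

lemma greedy_succeeds_shift:
  assumes n: "6 \<le> n" and m: "quilt n \<le> m" "m < quilt (Suc n)"
  shows "greedy_succeeds m \<longleftrightarrow> greedy_succeeds (m - quilt n)"
proof -
  have "m \<noteq> 0"
    using m quilt_ge[of n] n by simp
  have dec: "greedy_dec m ks \<longleftrightarrow> (\<exists>ks'. ks = n # ks' \<and> greedy_dec (m - quilt n) ks')" for ks
  proof (cases ks)
    case Nil
    then show ?thesis
      using \<open>m \<noteq> 0\<close> by (simp add: greedy_dec_Nil_iff)
  next
    case (Cons k ks')
    then show ?thesis
      using m n quilt_bracket_unique[of k m n] by (auto simp: greedy_dec_Cons_iff)
  qed
  have far: "\<forall>i\<in>set ks. i + 5 \<le> n" if "greedy_dec (m - quilt n) ks" for ks
  proof
    fix i assume "i \<in> set ks"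
    then have "quilt i < quilt (n - 4)"
      using greedy_dec_set[OF that] m quilt_gap[OF n] by fastforce
    then show "i + 5 \<le> n"
      by (simp add: quilt_less_iff)
  qed
  have "greedy_succeeds m \<longleftrightarrow> (\<exists>ks. greedy_dec (m - quilt n) ks \<and> FQ_legal_list (n # ks))"
    unfolding greedy_succeeds_def dec by blast
  also have "\<dots> \<longleftrightarrow> greedy_succeeds (m - quilt n)"
    unfolding greedy_succeeds_def using far FQ_legal_list_Cons_far n by auto
  finally show ?thesis .
qed

definition greedy_count :: "nat \<Rightarrow> nat" where
  "greedy_count n = card {m. m < quilt n \<and> greedy_succeeds m}"

lemma greedy_succeeds_le_5: "m \<le> 5 \<Longrightarrow> greedy_succeeds m"
proof (cases "m = 0")
  case True
  then show ?thesis
    unfolding greedy_succeeds_def FQ_legal_list_def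
    by (auto intro: greedy_zero simp: FQ_legal_set_def)
next
  case False
  assume "m \<le> 5"
  then have "m < quilt (Suc m)"
    using quilt_6 by (cases "m = 5") (auto simp: quilt_small)
  with \<open>m \<le> 5\<close> False have "greedy_dec m [m]"
    by (simp add: greedy_dec_Cons_iff greedy_dec_Nil_iff quilt_small)
  moreover have "FQ_legal_list [m]"
    using False by (simp add: FQ_legal_list_def FQ_legal_set_def)
  ultimately show ?thesis
    unfolding greedy_succeeds_def by blast
qed

lemma not_greedy_succeeds_6: "\<not> greedy_succeeds 6"
proof
  have "greedy_dec 6 [5, 1]"
    using quilt_6 by (simp add: greedy_dec_Cons_iff greedy_dec_Nil_iff quilt_small)
  moreover assume "greedy_succeeds 6"
  ultimately have "FQ_legal_list [5, 1]"
    unfolding greedy_succeeds_def using greedy_dec_unique by blast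
  then show False
    by (simp add: FQ_legal_list_def FQ_legal_set_def)
qed

lemma greedy_count_small: "n \<le> 6 \<Longrightarrow> greedy_count n = n"
proof -
  assume "n \<le> 6"
  moreover have "m < 7 \<longleftrightarrow> m \<le> 5 \<or> m = 6" for m :: nat
    by arith
  ultimately have "{m. m < quilt n \<and> greedy_succeeds m} = {..<n}"
    using greedy_succeeds_le_5 not_greedy_succeeds_6 quilt_6
    by (cases "n = 6") (auto simp: quilt_small)
  then show ?thesis
    by (simp add: greedy_count_def)
qed

lemma greedy_count_rec:
  assumes n: "6 \<le> n"
  shows "greedy_count (Suc n) = greedy_count n + greedy_count (n - 4)"
proof -
  let ?A = "{m. m < quilt n \<and> greedy_succeeds m}"
  let ?B = "{m. m < quilt (n - 4) \<and> greedy_succeeds m}"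
  have "{m. m < quilt (Suc n) \<and> greedy_succeeds m} = ?A \<union> (\<lambda>m. m + quilt n) ` ?B"
  proof (intro equalityI subsetI)
    fix m assume m: "m \<in> {m. m < quilt (Suc n) \<and> greedy_succeeds m}"
    show "m \<in> ?A \<union> (\<lambda>m. m + quilt n) ` ?B"
    proof (cases "m < quilt n")
      case True
      with m show ?thesis
        by simp
    next
      case False
      then have "m - quilt n \<in> ?B"
        using m greedy_succeeds_shift[OF n] quilt_gap[OF n] by auto
      moreover have "m = (m - quilt n) + quilt n"
        using False by simp
      ultimately show ?thesis
        by blast
    qed
  next
    fix m assume "m \<in> ?A \<union> (\<lambda>m. m + quilt n) ` ?B"
    then show "m \<in> {m. m < quilt (Suc n) \<and> greedy_succeeds m}"
      using greedy_succeeds_shift[OF n] quilt_gap[OF n] strict_monoD[OF strict_mono_quilt, of n "Suc n"]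
      by auto
  qed
  moreover have "?A \<inter> (\<lambda>m. m + quilt n) ` ?B = {}"
    by auto
  moreover have "card ((\<lambda>m. m + quilt n) ` ?B) = card ?B"
    by (rule card_image) (simp add: inj_on_def)
  ultimately show ?thesis
    unfolding greedy_count_def by (simp add: card_Un_disjoint)
qed

lemma card_greedy_succeeds_below_fq:
  assumes "1 \<le> n"
  shows "card {m \<in> {1..<fq n}. greedy_succeeds m} + 1 = greedy_count n"
proof -
  let ?A = "{m. m < quilt n \<and> greedy_succeeds m}"
  have "{m \<in> {1..<fq n}. greedy_succeeds m} = ?A - {0}"
    using fq_eq_quilt[OF assms] by auto
  moreover have "0 \<in> ?A"
    using quilt_ge[of n] assms greedy_succeeds_le_5[of 0] by simp
  ultimately show ?thesis
    unfolding greedy_count_def using card_Suc_Diff1[of ?A 0] by simp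
qed

definition period_correction :: "nat \<Rightarrow> int" where
  "period_correction n = [-2, -3, -1, 2, 3, 1] ! (n mod 6)"

lemma period_correction_rec:
  "period_correction (n + 5) = period_correction (n + 4) + period_correction n"
proof -
  have "(n + 5) mod 6 = (n mod 6 + 5) mod 6" "(n + 4) mod 6 = (n mod 6 + 4) mod 6"
    by (simp_all add: mod_add_left_eq)
  moreover have "n mod 6 \<in> {0, 1, 2, 3, 4, 5}"
    by auto
  ultimately show ?thesis
    unfolding period_correction_def by auto
qed

lemma abs_period_correction_le: "\<bar>period_correction n\<bar> \<le> 3"
proof -
  have "n mod 6 \<in> {0, 1, 2, 3, 4, 5}"
    by auto
  then show ?thesis
    unfolding period_correction_def by auto
qed

text \<open>The greedy count satisfies the recurrence with characteristic polynomial
  \<open>x\<^sup>5 - x\<^sup>4 - 1 = (x\<^sup>2 - x + 1) (x\<^sup>3 - x - 1)\<close>.  The period-6 correction removes the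
  component belonging to the sixth roots of unity, leaving a solution of the Quilt recurrence.\<close>

definition corrected_count :: "nat \<Rightarrow> int" where
  "corrected_count n = 7 * int (greedy_count n) - period_correction n"

lemma corrected_count_rec5:
  assumes "2 \<le> n"
  shows "corrected_count (n + 5) = corrected_count (n + 4) + corrected_count n"
proof -
  have "greedy_count (n + 5) = greedy_count (n + 4) + greedy_count n"
    using greedy_count_rec[of "n + 4"] assms by (simp add: ac_simps)
  then show ?thesis
    unfolding corrected_count_def using period_correction_rec[of n] by simp
qed

lemma corrected_count_rec:
  "1 \<le> n \<Longrightarrow> corrected_count (n + 3) = corrected_count (n + 1) + corrected_count n"
proof (induction n rule: less_induct)
  case (less n)
  show ?case
  proof (cases "n \<le> 3")
    case True
    with less.prems have "n \<in> {1, 2, 3}"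
      by auto
    then show ?thesis
      by (auto simp: corrected_count_def greedy_count_small period_correction_def)
  next
    case False
    define k where "k = n - 2"
    have n: "n = k + 2" and k: "2 \<le> k"
      using False by (auto simp: k_def)
    have "corrected_count (k + 5) = corrected_count (k + 4) + corrected_count k"
      using corrected_count_rec5[OF k] .
    moreover have "corrected_count (k + 4) = corrected_count (k + 2) + corrected_count (k + 1)"
      using less.IH[of "k + 1"] n by (simp add: eval_nat_numeral)
    moreover have "corrected_count (k + 3) = corrected_count (k + 1) + corrected_count k"
      using less.IH[of k] n k by simp
    ultimately show ?thesis
      using n by (simp add: eval_nat_numeral)
  qed
qed

definition padovan_step :: "'a::plus \<times> 'a \<times> 'a \<Rightarrow> 'a \<times> 'a \<times> 'a" where
  "padovan_step = (\<lambda>(x, y, z). (y, z, y + x))"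

lemma padovan_step_funpow:
  assumes "\<And>n. N \<le> n \<Longrightarrow> x (n + 3) = x (n + 1) + x n"
  shows "(padovan_step ^^ k) (x N, x (N + 1), x (N + 2)) = (x (N + k), x (N + k + 1), x (N + k + 2))"
proof (induction k)
  case 0
  then show ?case by simp
next
  case (Suc k)
  have "x (N + k + 3) = x (N + k + 1) + x (N + k)"
    using assms[of "N + k"] by simp
  with Suc show ?case
    by (simp add: padovan_step_def eval_nat_numeral add_ac)
qed

lemma funpow_numeral: "f ^^ numeral k = f \<circ> f ^^ pred_numeral k"
  by (simp add: numeral_eq_Suc)

lemma quilt_40_to_43:
  "quilt 40 = 97229 \<and> quilt 41 = 128801 \<and> quilt 42 = 170625 \<and> quilt 43 = 226030"
proof -
  have "(quilt 40, quilt 41, quilt 42) = (padovan_step ^^ 38) (quilt 2, quilt 3, quilt 4)"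
    using padovan_step_funpow[of 2 quilt 38] quilt_rec by simp
  also have "\<dots> = (97229, 128801, 170625)"
    by (simp add: quilt_small funpow_numeral padovan_step_def)
  finally show ?thesis
    using quilt_rec[of 40] by simp
qed

lemma corrected_count_40_to_43:
  "corrected_count 40 = 630424 \<and> corrected_count 41 = 835134 \<and>
   corrected_count 42 = 1106317 \<and> corrected_count 43 = 1465558"
proof -
  have init: "corrected_count 1 = 10" "corrected_count 2 = 15" "corrected_count 3 = 19"
    by (simp_all add: corrected_count_def greedy_count_small period_correction_def)
  have "(corrected_count 40, corrected_count 41, corrected_count 42) =
      (padovan_step ^^ 39) (corrected_count 1, corrected_count 2, corrected_count 3)"
    using padovan_step_funpow[of 1 corrected_count 39] corrected_count_rec
    by (simp add: numeral_2_eq_2 numeral_3_eq_3)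
  also have "\<dots> = (630424, 835134, 1106317)"
    unfolding init by (simp add: funpow_numeral padovan_step_def)
  finally show ?thesis
    using corrected_count_rec[of 40] by simp
qed

lemma padovan_lower_bound:
  fixes q :: "nat \<Rightarrow> real"
  assumes rec: "\<And>n. N \<le> n \<Longrightarrow> q (n + 3) = q (n + 1) + q n"
    and r: "0 < r" "r ^ 3 \<le> r + 1" and c: "0 \<le> c"
    and init: "\<And>i. i < 3 \<Longrightarrow> c * r ^ i \<le> q (N + i)"
  shows "c * r ^ k \<le> q (N + k)"
proof (induction k rule: less_induct)
  case (less k)
  show ?case
  proof (cases "k < 3")
    case True
    then show ?thesis by (rule init)
  next
    case False
    define j where "j = k - 3"
    have k: "k = j + 3"
      using False by (simp add: j_def)
    have "c * r ^ j * r ^ 3 \<le> c * r ^ j * (r + 1)"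
      using r c by (intro mult_left_mono) simp_all
    then have "c * r ^ k \<le> c * r ^ (j + 1) + c * r ^ j"
      by (simp add: k power_add algebra_simps)
    also have "\<dots> \<le> q (N + (j + 1)) + q (N + j)"
      using less.IH[of "j + 1"] less.IH[of j] k by (intro add_mono) simp_all
    also have "\<dots> = q (N + k)"
      using rec[of "N + j"] k by (simp add: add.assoc)
    finally show ?thesis .
  qed
qed

lemma padovan_casoratian_bound:
  fixes a q :: "nat \<Rightarrow> real"
  assumes rec_a: "\<And>n. N \<le> n \<Longrightarrow> a (n + 3) = a (n + 1) + a n"
    and rec_q: "\<And>n. N \<le> n \<Longrightarrow> q (n + 3) = q (n + 1) + q n"
    and b: "0 \<le> b" "1 + b ^ 2 \<le> b ^ 3"
    and init: "\<And>i. i < 3 \<Longrightarrow> \<bar>a (N + i + 1) * q (N + i) - a (N + i) * q (N + i + 1)\<bar> \<le> M * b ^ i"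
  shows "\<bar>a (N + k + 1) * q (N + k) - a (N + k) * q (N + k + 1)\<bar> \<le> M * b ^ k"
proof -
  define W where "W n = a (n + 1) * q n - a n * q (n + 1)" for n
  have W_rec: "W (n + 3) = W n - W (n + 2)" if "N \<le> n" for n
    using rec_a[of n] rec_q[of n] rec_a[of "Suc n"] rec_q[of "Suc n"] that
    unfolding W_def by (simp add: eval_nat_numeral) (simp add: algebra_simps)
  have "0 \<le> M"
    using init[of 0] by simp
  have "\<bar>W (N + k)\<bar> \<le> M * b ^ k"
  proof (induction k rule: less_induct)
    case (less k)
    show ?case
    proof (cases "k < 3")
      case True
      then show ?thesis
        using init unfolding W_def by (simp add: add.assoc)
    next
      case False
      define j where "j = k - 3"
      have k: "k = j + 3"
        using False by (simp add: j_def)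
      have "\<bar>W (N + k)\<bar> \<le> \<bar>W (N + j)\<bar> + \<bar>W (N + (j + 2))\<bar>"
        using W_rec[of "N + j"] k by (simp add: add.assoc)
      also have "\<dots> \<le> M * b ^ j + M * b ^ (j + 2)"
        using less.IH[of j] less.IH[of "j + 2"] k by (intro add_mono) simp_all
      also have "\<dots> = M * b ^ j * (1 + b ^ 2)"
        by (simp add: power_add algebra_simps power2_eq_square)
      also have "\<dots> \<le> M * b ^ j * b ^ 3"
        using \<open>0 \<le> M\<close> b by (intro mult_left_mono) simp_all
      also have "\<dots> = M * b ^ k"
        by (simp add: k power_add)
      finally show ?thesis .
    qed
  qed
  then show ?thesis
    unfolding W_def by (simp add: add.assoc)
qed

lemma padovan_ratio_increment_bound:
  fixes a q :: "nat \<Rightarrow> real"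
  assumes rec_a: "\<And>n. N \<le> n \<Longrightarrow> a (n + 3) = a (n + 1) + a n"
    and rec_q: "\<And>n. N \<le> n \<Longrightarrow> q (n + 3) = q (n + 1) + q n"
    and r: "0 < r" "r ^ 3 \<le> r + 1" and c: "0 < c"
    and init_q: "\<And>i. i < 3 \<Longrightarrow> c * r ^ i \<le> q (N + i)"
    and b: "0 \<le> b" "1 + b ^ 2 \<le> b ^ 3"
    and init_W: "\<And>i. i < 3 \<Longrightarrow> \<bar>a (N + i + 1) * q (N + i) - a (N + i) * q (N + i + 1)\<bar> \<le> M * b ^ i"
  shows "\<bar>a (N + k + 1) / q (N + k + 1) - a (N + k) / q (N + k)\<bar> \<le> M / (c\<^sup>2 * r) * (b / r\<^sup>2) ^ k"
proof -
  have low: "c * r ^ i \<le> q (N + i)" for i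
    using padovan_lower_bound[OF rec_q r less_imp_le[OF c] init_q] .
  have pos: "0 < q (N + i)" for i
    using low[of i] c r by (meson less_le_trans mult_pos_pos zero_less_power)
  have W: "\<bar>a (N + k + 1) * q (N + k) - a (N + k) * q (N + k + 1)\<bar> \<le> M * b ^ k"
    using padovan_casoratian_bound[OF rec_a rec_q b init_W] .
  have "c * r ^ k * (c * r ^ (k + 1)) \<le> q (N + k) * q (N + k + 1)"
    using low[of k] low[of "k + 1"] pos[of k] c r by (intro mult_mono) (simp_all add: add.assoc)
  moreover have "0 \<le> M * b ^ k"
    using W b by (meson abs_ge_zero order_trans)
  moreover have "a (N + k + 1) / q (N + k + 1) - a (N + k) / q (N + k) =
      (a (N + k + 1) * q (N + k) - a (N + k) * q (N + k + 1)) / (q (N + k) * q (N + k + 1))"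
    using pos[of k] pos[of "k + 1"] by (simp add: field_simps)
  ultimately have "\<bar>a (N + k + 1) / q (N + k + 1) - a (N + k) / q (N + k)\<bar>
      \<le> M * b ^ k / (c * r ^ k * (c * r ^ (k + 1)))"
    using W pos[of k] pos[of "k + 1"] c r
    by (simp only: abs_divide abs_mult abs_of_pos) (intro frac_le; simp add: add.assoc)
  also have "\<dots> = M / (c\<^sup>2 * r) * (b / r\<^sup>2) ^ k"
  proof -
    have "(b / r\<^sup>2) ^ k = b ^ k / (r ^ k * r ^ k)"
      by (simp add: power_divide power_mult_distrib power2_eq_square)
    then show ?thesis
      using c r by (simp add: power_add power2_eq_square field_simps)
  qed
  finally show ?thesis .
qed

lemma padovan_ratio_limit:
  fixes a q :: "nat \<Rightarrow> real"
  assumes rec_a: "\<And>n. N \<le> n \<Longrightarrow> a (n + 3) = a (n + 1) + a n"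
    and rec_q: "\<And>n. N \<le> n \<Longrightarrow> q (n + 3) = q (n + 1) + q n"
    and r: "0 < r" "r ^ 3 \<le> r + 1" and c: "0 < c"
    and init_q: "\<And>i. i < 3 \<Longrightarrow> c * r ^ i \<le> q (N + i)"
    and b: "0 \<le> b" "1 + b ^ 2 \<le> b ^ 3" "b < r\<^sup>2"
    and init_W: "\<And>i. i < 3 \<Longrightarrow> \<bar>a (N + i + 1) * q (N + i) - a (N + i) * q (N + i + 1)\<bar> \<le> M * b ^ i"
  shows "\<exists>\<rho>. (\<lambda>n. a n / q n) \<longlonglongrightarrow> \<rho> \<and> \<bar>\<rho> - a N / q N\<bar> \<le> M / (c\<^sup>2 * r) / (1 - b / r\<^sup>2)"
proof -
  define C where "C = M / (c\<^sup>2 * r)"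
  define \<gamma> where "\<gamma> = b / r\<^sup>2"
  define d where "d k = a (N + Suc k) / q (N + Suc k) - a (N + k) / q (N + k)" for k
  have \<gamma>: "\<bar>\<gamma>\<bar> < 1"
    using b r by (simp add: \<gamma>_def)
  have d: "norm (d k) \<le> C * \<gamma> ^ k" for k
    using padovan_ratio_increment_bound[OF rec_a rec_q r c init_q b(1,2) init_W, of k]
    by (simp add: d_def C_def \<gamma>_def)
  have geom: "(\<lambda>k. C * \<gamma> ^ k) sums (C / (1 - \<gamma>))"
    using sums_mult[OF geometric_sums[OF \<gamma>[folded real_norm_def]], of C] by simp
  have "summable d"
    by (rule summable_comparison_test[OF _ sums_summable[OF geom]]) (use d in auto)
  define f where "f k = a (N + k) / q (N + k)" for k
  have "(\<lambda>k. f 0 + (\<Sum>i<k. d i)) \<longlonglongrightarrow> f 0 + suminf d"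
    by (intro tendsto_add tendsto_const summable_LIMSEQ \<open>summable d\<close>)
  moreover have "(\<Sum>i<k. d i) = f k - f 0" for k
    unfolding d_def f_def by (rule sum_lessThan_telescope)
  ultimately have "(\<lambda>k. a (k + N) / q (k + N)) \<longlonglongrightarrow> a N / q N + suminf d"
    by (simp add: f_def add.commute)
  then have "(\<lambda>n. a n / q n) \<longlonglongrightarrow> a N / q N + suminf d"
    by (rule LIMSEQ_offset)
  moreover have "\<bar>suminf d\<bar> \<le> C / (1 - \<gamma>)"
    using norm_suminf_le[of d "\<lambda>k. C * \<gamma> ^ k"] d sums_summable[OF geom] sums_unique[OF geom]
    by simp
  ultimately show ?thesis
    unfolding C_def \<gamma>_def by (intro exI[of _ "a N / q N + suminf d"]) simp
qed

lemma corrected_count_ratio_limit: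
  "\<exists>\<rho>. (\<lambda>n. real_of_int (corrected_count n) / (7 * real (quilt n))) \<longlonglongrightarrow> \<rho> \<and>
       \<bar>\<rho> - 0.92627\<bar> < 0.00001"
proof -
  let ?a = "\<lambda>n. real_of_int (corrected_count n)" and ?q = "\<lambda>n. real (quilt n)"
  have three: "i < 3 \<longleftrightarrow> i = 0 \<or> i = 1 \<or> i = 2" for i :: nat
    by auto
  note initial = quilt_40_to_43 corrected_count_40_to_43
  txt \<open>\<open>r = 13/10\<close> lies below the growth rate (the real root of \<open>x\<^sup>3 = x + 1\<close>, about 1.3247), and
    \<open>b = 3/2\<close> above the real root of \<open>x\<^sup>3 = x\<^sup>2 + 1\<close>, the growth rate of the majorant
    \<open>\<bar>W (n + 3)\<bar> \<le> \<bar>W (n + 2)\<bar> + \<bar>W n\<bar>\<close> of the Casoratian.\<close>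
  have rec_a: "?a (n + 3) = ?a (n + 1) + ?a n" if "40 \<le> n" for n
    using corrected_count_rec[of n] that by simp
  have rec_q: "?q (n + 3) = ?q (n + 1) + ?q n" if "40 \<le> n" for n
    using quilt_rec[of n] that by simp
  have init_q: "97229 * (13 / 10) ^ i \<le> ?q (40 + i)" if "i < 3" for i
    using that initial by (auto simp: three power2_eq_square)
  have init_W: "\<bar>?a (40 + i + 1) * ?q (40 + i) - ?a (40 + i) * ?q (40 + i + 1)\<bar> \<le> 2062 * (3 / 2) ^ i"
    if "i < 3" for i
    using that initial by (auto simp: three power2_eq_square)
  have "\<exists>\<rho>. (\<lambda>n. ?a n / ?q n) \<longlonglongrightarrow> \<rho> \<and>
      \<bar>\<rho> - ?a 40 / ?q 40\<bar> \<le> 2062 / (97229\<^sup>2 * (13 / 10)) / (1 - (3 / 2) / (13 / 10)\<^sup>2)"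
    by (rule padovan_ratio_limit[OF rec_a rec_q _ _ _ init_q _ _ _ init_W])
      (simp_all add: power2_eq_square power3_eq_cube)
  then obtain \<rho> where lim: "(\<lambda>n. ?a n / ?q n) \<longlonglongrightarrow> \<rho>"
    and err: "\<bar>\<rho> - ?a 40 / ?q 40\<bar> \<le> 2062 / (97229\<^sup>2 * (13 / 10)) / (1 - (3 / 2) / (13 / 10)\<^sup>2)"
    by blast
  have "(\<lambda>n. ?a n / (7 * ?q n)) \<longlonglongrightarrow> \<rho> / 7"
    using tendsto_divide[OF lim tendsto_const[of 7]] by (simp add: mult.commute)
  moreover have "\<bar>\<rho> / 7 - 0.92627\<bar> < 0.00001"
    using err initial unfolding abs_le_iff abs_less_iff by (simp add: power2_eq_square)
  ultimately show ?thesis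
    by blast
qed

lemma quilt_tendsto_at_top: "filterlim (\<lambda>n. real (quilt n)) at_top sequentially"
  by (rule filterlim_at_top_mono[OF filterlim_real_sequentially]) (simp add: quilt_ge)

lemma greedy_count_ratio_limit:
  assumes "(\<lambda>n. real_of_int (corrected_count n) / (7 * real (quilt n))) \<longlonglongrightarrow> \<rho>"
  shows "(\<lambda>n. real (greedy_count n) / real (quilt n)) \<longlonglongrightarrow> \<rho>"
proof -
  let ?P = "\<lambda>n. real_of_int (period_correction n) / (7 * real (quilt n))"
  have inv: "(\<lambda>n. inverse (real (quilt n))) \<longlonglongrightarrow> 0"
    by (rule tendsto_inverse_0_at_top[OF quilt_tendsto_at_top])
  have bound: "norm (?P n) \<le> norm (inverse (real (quilt n))) * 3" for n
  proof -
    have shrink: "3 / (7 * x) \<le> inverse x * 3" if "0 \<le> x" for x :: real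
      using that by (cases "x = 0") (simp_all add: field_simps)
    have "norm (?P n) = \<bar>real_of_int (period_correction n)\<bar> / (7 * real (quilt n))"
      by (simp add: abs_divide)
    also have "\<dots> \<le> 3 / (7 * real (quilt n))"
      using abs_period_correction_le[of n] by (intro divide_right_mono) linarith+
    also have "\<dots> \<le> norm (inverse (real (quilt n))) * 3"
      using shrink[of "real (quilt n)"] by simp
    finally show ?thesis .
  qed
  have "?P \<longlonglongrightarrow> 0"
    by (rule tendsto_0_le[OF inv always_eventually]) (use bound in blast)
  with assms have "(\<lambda>n. real_of_int (corrected_count n) / (7 * real (quilt n)) + ?P n) \<longlonglongrightarrow> \<rho>"
    using tendsto_add by fastforce
  moreover have "real_of_int (corrected_count n) / (7 * real (quilt n)) + ?P n =
      real (greedy_count n) / real (quilt n)" for n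
    by (simp add: corrected_count_def add_divide_distrib[symmetric])
  ultimately show ?thesis
    by simp
qed

lemma greedy_proportion_eq:
  assumes "2 \<le> n"
  shows "real (card {m \<in> {1..<fq n}. greedy_succeeds m}) / real (fq n - 1) =
    (real (greedy_count n) / real (quilt n) - inverse (real (quilt n))) / (1 - inverse (real (quilt n)))"
proof -
  have q: "2 \<le> quilt n"
    using quilt_ge[of n] assms by simp
  have "real (card {m \<in> {1..<fq n}. greedy_succeeds m}) = real (greedy_count n) - 1"
    using card_greedy_succeeds_below_fq[of n] assms by linarith
  moreover have "real (fq n - 1) = real (quilt n) - 1"
    using fq_eq_quilt[of n] q assms by (simp add: of_nat_diff)
  moreover have "(x - 1) / (y - 1) = (x / y - inverse y) / (1 - inverse y)" if "2 \<le> y" for x y :: real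
    using that by (simp add: field_simps)
  ultimately show ?thesis
    using q by simp
qed

theorem mainTheorem14:
  shows "\<exists>\<rho>::real. 0 < \<rho> \<and> \<rho> < 1 \<and> \<bar>\<rho> - 0.92627\<bar> < 0.00001 \<and>
    (\<lambda>n. real (card {m \<in> {1..<fq n}. greedy_succeeds m}) / real (fq n - 1))
      \<longlonglongrightarrow> \<rho>"
proof -
  obtain \<rho> where lim: "(\<lambda>n. real_of_int (corrected_count n) / (7 * real (quilt n))) \<longlonglongrightarrow> \<rho>"
    and \<rho>: "\<bar>\<rho> - 0.92627\<bar> < 0.00001"
    using corrected_count_ratio_limit by blast
  have "(\<lambda>n. (real (greedy_count n) / real (quilt n) - inverse (real (quilt n))) /
      (1 - inverse (real (quilt n)))) \<longlonglongrightarrow> (\<rho> - 0) / (1 - 0)"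
    using greedy_count_ratio_limit[OF lim] tendsto_inverse_0_at_top[OF quilt_tendsto_at_top]
    by (intro tendsto_intros) auto
  moreover have "\<forall>\<^sub>F n in sequentially.
      (real (greedy_count n) / real (quilt n) - inverse (real (quilt n))) / (1 - inverse (real (quilt n))) =
      real (card {m \<in> {1..<fq n}. greedy_succeeds m}) / real (fq n - 1)"
    using greedy_proportion_eq by (intro eventually_sequentiallyI[of 2]) simp
  ultimately have "(\<lambda>n. real (card {m \<in> {1..<fq n}. greedy_succeeds m}) / real (fq n - 1)) \<longlonglongrightarrow> \<rho>"
    by (simp add: Lim_transform_eventually)
  with \<rho> show ?thesis
    unfolding abs_less_iff by (intro exI[of _ \<rho>]) simp
qed

end
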